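(* Let $\mathbb{A}_1\subseteq\cdots\subseteq\mathbb{A}_k$ be a flag of linear subspaces of $\mathbb{R}^n$, $\mathbb{B}\in\Omega(\mathbb{A}_1,\dots,\mathbb{A}_k)$ and $b\in\mathbb{R}^n$. Then the fiber \[ \tau_b^{-1}(\mathbb{B})=\{\mathbb{B}+c\in\mathrm{Graff}(k,n):\dim((\mathbb{B}+c)\cap(\mathbb{A}_j+b))\ge j,\ j=1,\dots,k\} \] is convex (under the identification of the affine subspaces with direction space $\mathbb{B}$ with the quotient vector space $\mathbb{R}^n/\mathbb{B}$ via $\mathbb{B}+c\mapsto c+\mathbb{B}$), and therefore contractible.
   Context: $\mathrm{Graff}(k,n)$ is the set of $k$-dimensional affine subspaces of $\mathbb{R}^n$. $\Omega(\mathbb{A}_1,\dots,\mathbb{A}_k)=\{\mathbb{B}\in\mathrm{Gr}(k,n):\dim(\mathbb{B}\cap\mathbb{A}_j)\ge j,\ j=1,\dots,k\}$. $\tau_b$ is the restriction of $\mathbb{A}+c\mapsto\mathbb{A}$ to the affine Schubert variety $\Psi(\mathbb{A}_1+b,\dots,\mathbb{A}_k+b)=\{\mathbb{B}+c\in\mathrm{Graff}(k,n):\dim((\mathbb{B}+c)\cap(\mathbb{A}_j+b))\ge j,\ j=1,\dots,k\}$, with values in $\Omega(\mathbb{A}_1,\dots,\mathbb{A}_k)$. *)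

theory Defs
  imports "HOL-Analysis.Analysis"
begin

definition Gr :: "nat \<Rightarrow> 'a::euclidean_space set set" where
  "Gr k = {B. subspace B \<and> dim B = k}"

definition Schubert_Omega :: "nat \<Rightarrow> (nat \<Rightarrow> 'a::euclidean_space set) \<Rightarrow> 'a set set" where
  "Schubert_Omega k A = {B \<in> Gr k. \<forall>j\<in>{1..k}. dim (B \<inter> A j) \<ge> j}"

text \<open>The fibre of tau_b over B, described by translation vectors c: the affine
  subspace B + c lies in Psi(A_1 + b, ..., A_k + b). This set is a union of cosets
  c + B, i.e. the preimage of the fibre under the quotient map R^n -> R^n/B.\<close>
definition tau_fiber_vectors ::
  "nat \<Rightarrow> (nat \<Rightarrow> 'a::euclidean_space set) \<Rightarrow> 'a \<Rightarrow> 'a set \<Rightarrow> 'a set" where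
  "tau_fiber_vectors k A b B =
     {c. \<forall>j\<in>{1..k}. aff_dim ((\<lambda>x. x + c) ` B \<inter> (\<lambda>x. x + b) ` A j) \<ge> int j}"

end

theory Submission
  imports Defs
begin

text \<open>Two translates \<open>S + c\<close> and \<open>T + b\<close> of linear subspaces meet iff \<open>c - b \<in> S + T\<close>, and
  then they meet in a translate of \<open>S \<inter> T\<close>. Hence, when \<open>dim (B \<inter> A\<^sub>j) \<ge> j \<ge> 1\<close>, the condition
  \<open>aff_dim ((B + c) \<inter> (A\<^sub>j + b)) \<ge> j\<close> only says that the two translates meet, i.e.
  \<open>c \<in> b + (B + A\<^sub>j)\<close>. The fibre is therefore a finite intersection of affine subspaces,
  hence affine, convex and contractible.\<close>

lemma translates_subspaces_meet_iff:
  fixes S T :: "'a::real_vector set"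
  assumes "subspace S"
  shows "(\<lambda>z. z + c) ` S \<inter> (\<lambda>z. z + b) ` T \<noteq> {} \<longleftrightarrow> c - b \<in> {x + y |x y. x \<in> S \<and> y \<in> T}"
proof
  assume "(\<lambda>z. z + c) ` S \<inter> (\<lambda>z. z + b) ` T \<noteq> {}"
  then obtain x y where "x \<in> S" "y \<in> T" "x + c = y + b" by blast
  moreover have "- x \<in> S" using assms \<open>x \<in> S\<close> by (simp add: subspace_neg)
  moreover have "c - b = - x + y" using \<open>x + c = y + b\<close> by (simp add: algebra_simps)
  ultimately show "c - b \<in> {x + y |x y. x \<in> S \<and> y \<in> T}" by blast
next
  assume "c - b \<in> {x + y |x y. x \<in> S \<and> y \<in> T}"
  then obtain x y where "x \<in> S" "y \<in> T" "c - b = x + y" by blast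
  moreover have "- x \<in> S" using assms \<open>x \<in> S\<close> by (simp add: subspace_neg)
  moreover have "- x + c = y + b" using \<open>c - b = x + y\<close> by (simp add: algebra_simps)
  ultimately show "(\<lambda>z. z + c) ` S \<inter> (\<lambda>z. z + b) ` T \<noteq> {}" by blast
qed

lemma translates_subspaces_Int_eq:
  fixes S T :: "'a::real_vector set"
  assumes S: "subspace S" and T: "subspace T"
    and "x \<in> S" "y \<in> T" "c - b = x + y"
  shows "(\<lambda>z. z + c) ` S \<inter> (\<lambda>z. z + b) ` T = (+) (b + y) ` (S \<inter> T)"
proof (intro set_eqI iffI)
  fix z assume "z \<in> (\<lambda>z. z + c) ` S \<inter> (\<lambda>z. z + b) ` T"
  then obtain u v where "u \<in> S" "v \<in> T" "z = u + c" "z = v + b" by blast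
  then have "z - (b + y) = u + x" "z - (b + y) = v - y"
    using \<open>c - b = x + y\<close> by (simp_all add: algebra_simps)
  moreover have "u + x \<in> S" "v - y \<in> T"
    using \<open>u \<in> S\<close> \<open>v \<in> T\<close> assms(3,4) S T by (simp_all add: subspace_add subspace_diff)
  ultimately have "z - (b + y) \<in> S \<inter> T" by simp
  then show "z \<in> (+) (b + y) ` (S \<inter> T)" by (rule rev_image_eqI) simp
next
  fix z assume "z \<in> (+) (b + y) ` (S \<inter> T)"
  then obtain w where "w \<in> S" "w \<in> T" and z: "z = b + y + w" by blast
  have "z = (w - x) + c" "z = (w + y) + b"
    using z \<open>c - b = x + y\<close> by (simp_all add: algebra_simps)
  moreover have "w - x \<in> S" "w + y \<in> T"
    using \<open>w \<in> S\<close> \<open>w \<in> T\<close> assms(3,4) S T by (simp_all add: subspace_add subspace_diff)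
  ultimately show "z \<in> (\<lambda>z. z + c) ` S \<inter> (\<lambda>z. z + b) ` T" by blast
qed

lemma aff_dim_translates_subspaces_Int_ge_iff:
  fixes S T :: "'a::euclidean_space set"
  assumes S: "subspace S" and T: "subspace T" and "1 \<le> j" "j \<le> dim (S \<inter> T)"
  shows "int j \<le> aff_dim ((\<lambda>z. z + c) ` S \<inter> (\<lambda>z. z + b) ` T)
    \<longleftrightarrow> c - b \<in> {x + y |x y. x \<in> S \<and> y \<in> T}"
proof (cases "c - b \<in> {x + y |x y. x \<in> S \<and> y \<in> T}")
  case True
  then obtain x y where "x \<in> S" "y \<in> T" "c - b = x + y" by blast
  then have "aff_dim ((\<lambda>z. z + c) ` S \<inter> (\<lambda>z. z + b) ` T) = int (dim (S \<inter> T))"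
    by (simp add: translates_subspaces_Int_eq[OF S T] aff_dim_translation_eq
        aff_dim_subspace subspace_inter S T)
  with True assms(4) show ?thesis by simp
next
  case False
  then have "(\<lambda>z. z + c) ` S \<inter> (\<lambda>z. z + b) ` T = {}"
    using translates_subspaces_meet_iff[OF S] by blast
  with False assms(3) show ?thesis by simp
qed

lemma tau_fiber_vectors_eq_INT:
  fixes A :: "nat \<Rightarrow> 'a::euclidean_space set"
  assumes "\<forall>j\<in>{1..k}. subspace (A j)" and "B \<in> Schubert_Omega k A"
  shows "tau_fiber_vectors k A b B = (\<Inter>j\<in>{1..k}. (+) b ` {x + y |x y. x \<in> B \<and> y \<in> A j})"
proof -
  have B: "subspace B" and dim: "\<forall>j\<in>{1..k}. j \<le> dim (B \<inter> A j)"
    using assms(2) by (auto simp: Schubert_Omega_def Gr_def)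
  have translate_iff: "c \<in> (+) b ` X \<longleftrightarrow> c - b \<in> X" for c and X :: "'a set"
    by (metis add_diff_cancel_left' diff_add_cancel image_iff)
  have fiber_cond: "int j \<le> aff_dim ((\<lambda>z. z + c) ` B \<inter> (\<lambda>z. z + b) ` A j)
      \<longleftrightarrow> c \<in> (+) b ` {x + y |x y. x \<in> B \<and> y \<in> A j}" if "j \<in> {1..k}" for c j
    using aff_dim_translates_subspaces_Int_ge_iff[OF B] assms(1) dim that
    unfolding translate_iff by simp
  show ?thesis
    unfolding tau_fiber_vectors_def using fiber_cond by (auto simp: set_eq_iff)
qed

lemma affine_tau_fiber_vectors:
  fixes A :: "nat \<Rightarrow> 'a::euclidean_space set"
  assumes "\<forall>j\<in>{1..k}. subspace (A j)" and "B \<in> Schubert_Omega k A"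
  shows "affine (tau_fiber_vectors k A b B)"
proof -
  have "subspace B" using assms(2) by (simp add: Schubert_Omega_def Gr_def)
  then have "subspace {x + y |x y. x \<in> B \<and> y \<in> A j}" if "j \<in> {1..k}" for j
    using that assms(1) subspace_sums by blast
  then have "affine ((+) b ` {x + y |x y. x \<in> B \<and> y \<in> A j})" if "j \<in> {1..k}" for j
    using that by (simp add: affine_translation[symmetric] subspace_imp_affine)
  then show ?thesis
    unfolding tau_fiber_vectors_eq_INT[OF assms] by blast
qed

theorem lemma7p5:
  fixes A :: "nat \<Rightarrow> 'a::euclidean_space set" and B :: "'a set" and b :: 'a and k :: nat
  assumes "\<forall>j\<in>{1..k}. subspace (A j)"
    and "\<forall>j\<in>{1..<k}. A j \<subseteq> A (Suc j)"
    and "B \<in> Schubert_Omega k A"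
  shows "convex (tau_fiber_vectors k A b B) \<and> contractible (tau_fiber_vectors k A b B)"
proof -
  have "convex (tau_fiber_vectors k A b B)"
    using affine_tau_fiber_vectors[OF assms(1,3)] by (rule affine_imp_convex)
  then show ?thesis using convex_imp_contractible by simp
qed

end
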